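(* Let $T$ be a reflection factorization with entries in $G_6$ of length $\ell\ge 3$, and suppose at least one of the following holds: (1) $T$ contains at least two entries from $S$ and at least one entry from $R'$; (2) $T$ contains at least two entries from $R_1$ and at least one entry from $S$; (3) $T$ contains at least two entries from $R_1^{-1}$ and at least one entry from $S$. Then for any reflection $x$ whose conjugacy class (among $R_1,R_1^{-1},S$) contains some entry of $T$, there is a factorization in the Hurwitz orbit of $T$ whose right-most entry is $x$.
   Context: Let $G_7$ be the subgroup of $GL_2(\mathbb{C})$ generated by $s=\begin{bmatrix}1&0\\0&-1\end{bmatrix}$, $t=\frac14\begin{bmatrix}(1+\sqrt3)+(-1+\sqrt3)i & (1+\sqrt3)+(-1+\sqrt3)i\\ (-1+\sqrt3)-(1+\sqrt3)i & (1-\sqrt3)+(1+\sqrt3)i\end{bmatrix}$ and $u=t^{\top}$ (presentation $\langle s,t,u\mid s^2=t^3=u^3=1,\ stu=ust=tus\rangle$, order $144$). A reflection is a linear map of $\mathbb{C}^2$ whose fixed space has dimension $1$. Let $S$ be the $G_7$-conjugacy class of $s$ (six reflections of order $2$), $R_1$ the $G_7$-conjugacy class of $t$ (four reflections of order $3$), $R_1^{-1}=\{r^{-1}:r\in R_1\}$ and $R'=R_1\cup R_1^{-1}$. Let $G_6=\langle s,t\rangle$, of order $48$; its fourteen reflections are the elements of $R_1\cup R_1^{-1}\cup S$, and $R_1$, $R_1^{-1}$, $S$ are its reflection conjugacy classes. A reflection factorization of length $\ell$ is a tuple $(r_1,\dots,r_\ell)$ of reflections. The Hurwitz move $\sigma_i$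 sends $(r_1,\dots,r_\ell)$ to $(r_1,\dots,r_{i-1},r_{i+1},r_{i+1}^{-1}r_ir_{i+1},r_{i+2},\dots,r_\ell)$; the Hurwitz orbit of $T$ is the set of factorizations obtained from $T$ by finite sequences of Hurwitz moves. *)

theory Defs
  imports "HOL-Analysis.Analysis"
begin

type_synonym mat2 = "complex ^ 2 ^ 2"

definition mk2 :: "complex \<Rightarrow> complex \<Rightarrow> complex \<Rightarrow> complex \<Rightarrow> mat2" where
  "mk2 a b c d = vector [vector [a, b], vector [c, d]]"

definition r3 :: complex where "r3 = complex_of_real (sqrt 3)"

definition s_mat :: mat2 where "s_mat = mk2 1 0 0 (-1)"

definition t_mat :: mat2 where
  "t_mat = mk2 (((1 + r3) + (-1 + r3) * \<i>) / 4) (((1 + r3) + (-1 + r3) * \<i>) / 4)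
               (((-1 + r3) - (1 + r3) * \<i>) / 4) (((1 - r3) + (1 + r3) * \<i>) / 4)"

definition u_mat :: mat2 where "u_mat = transpose t_mat"

inductive_set gen_group :: "mat2 set \<Rightarrow> mat2 set" for X where
  one: "mat 1 \<in> gen_group X"
| mul: "x \<in> X \<Longrightarrow> g \<in> gen_group X \<Longrightarrow> x ** g \<in> gen_group X"
| mul_inv: "x \<in> X \<Longrightarrow> g \<in> gen_group X \<Longrightarrow> matrix_inv x ** g \<in> gen_group X"

definition G7 :: "mat2 set" where "G7 = gen_group {s_mat, t_mat, u_mat}"
definition G6 :: "mat2 set" where "G6 = gen_group {s_mat, t_mat}"

definition is_reflection :: "mat2 \<Rightarrow> bool" where
  "is_reflection A \<longleftrightarrow> (\<exists>w::complex^2. w \<noteq> 0 \<and> {v. A *v v = v} = {c *s w | c. True})"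

definition conj_class :: "mat2 set \<Rightarrow> mat2 \<Rightarrow> mat2 set" where
  "conj_class G a = {g ** a ** matrix_inv g | g. g \<in> G}"

definition S_cls :: "mat2 set" where "S_cls = conj_class G7 s_mat"
definition R1 :: "mat2 set" where "R1 = conj_class G7 t_mat"
definition R1inv :: "mat2 set" where "R1inv = matrix_inv ` R1"
definition Rprime :: "mat2 set" where "Rprime = R1 \<union> R1inv"

text \<open>Hurwitz move sigma_(i+1) (0-based index i, requires i+1 < length).\<close>
definition hurwitz_move :: "nat \<Rightarrow> mat2 list \<Rightarrow> mat2 list" where
  "hurwitz_move i T = T[i := T ! (i+1), i+1 := matrix_inv (T ! (i+1)) ** (T ! i) ** (T ! (i+1))]"

definition hurwitz_step :: "mat2 list \<Rightarrow> mat2 list \<Rightarrow> bool" where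
  "hurwitz_step T T' \<longleftrightarrow> (\<exists>i. i + 1 < length T \<and> T' = hurwitz_move i T)"

definition hurwitz_orbit :: "mat2 list \<Rightarrow> mat2 list set" where
  "hurwitz_orbit T = {T'. hurwitz_step\<^sup>*\<^sup>* T T'}"

definition count_in :: "mat2 set \<Rightarrow> mat2 list \<Rightarrow> nat" where
  "count_in C T = length (filter (\<lambda>r. r \<in> C) T)"

end

theory Submission
  imports Defs
begin

(* Every reflection of G6 is one of fourteen explicit matrices: the six matrices +-sigma_x,
  +-sigma_y, +-sigma_z forming S and four reflections of order three in each of R1 and R1^-1.
  Hurwitz moves conjugate entries by elements of G6, so they never change the class of an entry.
  Hence entries of T forming a short pattern (S S R1, S S R1^-1, R1 R1 S or R1^-1 R1^-1 S if the
  class of x occurs in it, otherwise R1 R1 S R1^-1 or R1^-1 R1^-1 S R1) can be pulled to the front,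
  leaving a tail B in G6. Moving the last entry of the pattern through B conjugates it by the
  product of B, so it suffices that the pattern part can be brought to end in a suitable conjugate
  of x. For the finitely many patterns over the fourteen reflections this is checked by evaluation:
  a few fixed move words, each followed by rotations of the last pair, reach every required
  last entry. *)

lemma matrix_inv_unique:
  fixes A B :: "'a::field^'n^'n"
  assumes "A ** B = mat 1"
  shows "matrix_inv A = B"
proof -
  have BA: "B ** A = mat 1"
    using assms matrix_left_right_inverse by blast
  have inv: "A ** matrix_inv A = mat 1 \<and> matrix_inv A ** A = mat 1"
    unfolding matrix_inv_def by (rule someI[of _ B]) (use assms BA in simp)
  have "matrix_inv A = (B ** A) ** matrix_inv A"
    by (simp add: BA)
  also have "\<dots> = B"
    using inv by (simp flip: matrix_mul_assoc)
  finally show ?thesis .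
qed

lemma matrix_inv_mat_1: "matrix_inv (mat 1 :: 'a::field^'n^'n) = mat 1"
  by (rule matrix_inv_unique) simp

lemma matrix_inv_right:
  fixes A :: "'a::semiring_1^'n^'n"
  assumes "invertible A"
  shows "A ** matrix_inv A = mat 1"
  using someI_ex[OF assms[unfolded invertible_def]] by (simp add: matrix_inv_def)

lemma matrix_inv_left:
  fixes A :: "'a::semiring_1^'n^'n"
  assumes "invertible A"
  shows "matrix_inv A ** A = mat 1"
  using someI_ex[OF assms[unfolded invertible_def]] by (simp add: matrix_inv_def)

lemma invertible_matrix_inv:
  fixes A :: "'a::semiring_1^'n^'n"
  assumes "invertible A"
  shows "invertible (matrix_inv A)"
  using matrix_inv_left[OF assms] matrix_inv_right[OF assms] invertible_def by blast

lemma matrix_inv_matrix_inv: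
  fixes A :: "'a::field^'n^'n"
  assumes "invertible A"
  shows "matrix_inv (matrix_inv A) = A"
  by (rule matrix_inv_unique) (rule matrix_inv_left[OF assms])

lemma matrix_inv_mult:
  fixes A B :: "'a::field^'n^'n"
  assumes "invertible A" "invertible B"
  shows "matrix_inv (A ** B) = matrix_inv B ** matrix_inv A"
proof (rule matrix_inv_unique)
  have "A ** B ** (matrix_inv B ** matrix_inv A) = A ** (B ** matrix_inv B) ** matrix_inv A"
    by (simp add: matrix_mul_assoc)
  then show "A ** B ** (matrix_inv B ** matrix_inv A) = mat 1"
    by (simp add: matrix_inv_right assms)
qed

lemma matrix_inv_conj_cancel:
  fixes A B :: "'a::field^'n^'n"
  assumes "invertible A"
  shows "matrix_inv A ** (A ** B ** matrix_inv A) ** A = B"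
proof -
  have "matrix_inv A ** (A ** B ** matrix_inv A) ** A = (matrix_inv A ** A) ** B ** (matrix_inv A ** A)"
    by (simp add: matrix_mul_assoc)
  then show ?thesis
    by (simp add: matrix_inv_left[OF assms])
qed

definition matrix_group :: "('a::semiring_1^'n^'n) set \<Rightarrow> bool" where
  "matrix_group G \<longleftrightarrow> mat 1 \<in> G \<and> (\<forall>g\<in>G. invertible g \<and> matrix_inv g \<in> G) \<and> (\<forall>g\<in>G. \<forall>h\<in>G. g ** h \<in> G)"

lemma matrix_group_invertible: "matrix_group G \<Longrightarrow> g \<in> G \<Longrightarrow> invertible g"
  unfolding matrix_group_def by blast

lemma gen_group_mult: "g \<in> gen_group X \<Longrightarrow> h \<in> gen_group X \<Longrightarrow> g ** h \<in> gen_group X"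
  by (induction g rule: gen_group.induct) (auto simp flip: matrix_mul_assoc intro: gen_group.intros)

lemma gen_group_generator: "x \<in> X \<Longrightarrow> x \<in> gen_group X"
  using gen_group.mul[OF _ gen_group.one] by simp

lemma gen_group_mono: "X \<subseteq> Y \<Longrightarrow> gen_group X \<subseteq> gen_group Y"
proof
  fix g assume XY: "X \<subseteq> Y" and g: "g \<in> gen_group X"
  from g show "g \<in> gen_group Y"
    by (induction g rule: gen_group.induct) (use XY in \<open>auto intro: gen_group.intros\<close>)
qed

lemma matrix_group_gen_group:
  assumes "\<forall>x\<in>X. invertible x"
  shows "matrix_group (gen_group X)"
proof -
  have "invertible g \<and> matrix_inv g \<in> gen_group X" if "g \<in> gen_group X" for g
    using that
  proof (induction g rule: gen_group.induct)
    case one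
    show ?case
      using gen_group.one invertible_def by (fastforce simp: matrix_inv_mat_1)
  next
    case (mul x g)
    have "invertible x" "matrix_inv x \<in> gen_group X"
      using assms mul.hyps gen_group.mul_inv[OF _ gen_group.one] by auto
    then show ?case
      using mul.IH by (simp add: invertible_mult matrix_inv_mult gen_group_mult)
  next
    case (mul_inv x g)
    have "invertible x" "x \<in> gen_group X"
      using assms mul_inv.hyps gen_group_generator by auto
    then show ?case
      using mul_inv.IH
      by (simp add: invertible_mult invertible_matrix_inv matrix_inv_mult matrix_inv_matrix_inv gen_group_mult)
  qed
  then show ?thesis
    unfolding matrix_group_def by (auto intro: gen_group.one gen_group_mult)
qed

definition conj_closed :: "('a::semiring_1^'n^'n) set \<Rightarrow> ('a^'n^'n) set \<Rightarrow> bool" where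
  "conj_closed G C \<longleftrightarrow> (\<forall>g\<in>G. \<forall>c\<in>C. g ** c ** matrix_inv g \<in> C)"

lemma conj_closed_subset: "conj_closed G C \<Longrightarrow> H \<subseteq> G \<Longrightarrow> conj_closed H C"
  unfolding conj_closed_def by blast

lemma conj_closed_right:
  fixes G :: "('a::field^'n^'n) set"
  assumes "matrix_group G" "conj_closed G C" "g \<in> G" "c \<in> C"
  shows "matrix_inv g ** c ** g \<in> C"
proof -
  have "matrix_inv g \<in> G" "invertible g"
    using assms(1,3) unfolding matrix_group_def by auto
  then show ?thesis
    using assms(2,4) matrix_inv_matrix_inv unfolding conj_closed_def by metis
qed

lemma conj_closed_self: "matrix_group G \<Longrightarrow> conj_closed G G"
  unfolding matrix_group_def conj_closed_def by blast

lemma conj_class_subset: "matrix_group G \<Longrightarrow> a \<in> G \<Longrightarrow> conj_class G a \<subseteq> G"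
  unfolding matrix_group_def conj_class_def by blast

lemma conj_closed_conj_class:
  assumes G: "matrix_group G"
  shows "conj_closed G (conj_class G a)"
  unfolding conj_closed_def
proof (intro ballI)
  fix g c assume g: "g \<in> G" and "c \<in> conj_class G a"
  then obtain h where h: "h \<in> G" and c: "c = h ** a ** matrix_inv h"
    unfolding conj_class_def by auto
  have "g ** c ** matrix_inv g = (g ** h) ** a ** matrix_inv (g ** h)"
    using G g h unfolding c matrix_group_def by (simp add: matrix_inv_mult matrix_mul_assoc)
  moreover have "g ** h \<in> G"
    using G g h unfolding matrix_group_def by blast
  ultimately show "g ** c ** matrix_inv g \<in> conj_class G a"
    unfolding conj_class_def by blast
qed

lemma conj_closed_image_matrix_inv:
  fixes G :: "('a::field^'n^'n) set"
  assumes G: "matrix_group G" and "C \<subseteq> G" "conj_closed G C"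
  shows "conj_closed G (matrix_inv ` C)"
  unfolding conj_closed_def
proof (intro ballI)
  fix g d assume g: "g \<in> G" and "d \<in> matrix_inv ` C"
  then obtain c where c: "c \<in> C" and d: "d = matrix_inv c"
    by blast
  have inv: "invertible g" "invertible c" "invertible (g ** c)" "matrix_inv g \<in> G"
    using G g c \<open>C \<subseteq> G\<close> unfolding matrix_group_def by (auto simp: invertible_mult)
  have "g ** d ** matrix_inv g = matrix_inv (g ** c ** matrix_inv g)"
    using inv by (simp add: d matrix_inv_mult invertible_matrix_inv matrix_inv_matrix_inv matrix_mul_assoc)
  moreover have "g ** c ** matrix_inv g \<in> C"
    using \<open>conj_closed G C\<close> g c unfolding conj_closed_def by blast
  ultimately show "g ** d ** matrix_inv g \<in> matrix_inv ` C"
    by simp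
qed

lemma conj_class_subset_conj_closed: "conj_closed G C \<Longrightarrow> a \<in> C \<Longrightarrow> conj_class G a \<subseteq> C"
  unfolding conj_closed_def conj_class_def by blast

lemma gen_group_conj_closed:
  assumes inv: "\<forall>x\<in>X. invertible x"
    and gen: "\<And>x c. x \<in> X \<Longrightarrow> c \<in> C \<Longrightarrow> x ** c ** matrix_inv x \<in> C \<and> matrix_inv x ** c ** x \<in> C"
  shows "conj_closed (gen_group X) C"
  unfolding conj_closed_def
proof
  fix g assume "g \<in> gen_group X"
  then show "\<forall>c\<in>C. g ** c ** matrix_inv g \<in> C"
  proof (induction g rule: gen_group.induct)
    case one
    then show ?case
      by (simp add: matrix_inv_mat_1)
  next
    case (mul x g)
    have "invertible x" "invertible g"
      using inv mul.hyps matrix_group_invertible[OF matrix_group_gen_group[OF inv]] by auto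
    then have "x ** g ** c ** matrix_inv (x ** g) = x ** (g ** c ** matrix_inv g) ** matrix_inv x" for c
      by (simp add: matrix_inv_mult matrix_mul_assoc)
    then show ?case
      using mul.IH gen[OF mul.hyps(1)] by simp
  next
    case (mul_inv x g)
    have "invertible x" "invertible g"
      using inv mul_inv.hyps matrix_group_invertible[OF matrix_group_gen_group[OF inv]] by auto
    then have "matrix_inv x ** g ** c ** matrix_inv (matrix_inv x ** g) = matrix_inv x ** (g ** c ** matrix_inv g) ** x" for c
      by (simp add: matrix_inv_mult invertible_matrix_inv matrix_inv_matrix_inv matrix_mul_assoc)
    then show ?case
      using mul_inv.IH gen[OF mul_inv.hyps(1)] by simp
  qed
qed

section \<open>Hurwitz moves\<close>

lemma hurwitz_move_0 [simp]: "hurwitz_move 0 (a # b # T) = b # (matrix_inv b ** a ** b) # T"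
  by (simp add: hurwitz_move_def)

lemma hurwitz_move_Suc [simp]: "hurwitz_move (Suc i) (a # T) = a # hurwitz_move i T"
  by (simp add: hurwitz_move_def)

lemma hurwitz_move_append: "i + 1 < length T \<Longrightarrow> hurwitz_move i (T @ R) = hurwitz_move i T @ R"
  by (simp add: hurwitz_move_def nth_append list_update_append)

lemma hurwitz_step_0: "hurwitz_step (a # b # T) (b # (matrix_inv b ** a ** b) # T)"
  unfolding hurwitz_step_def by (rule exI[of _ 0]) simp

lemma hurwitz_steps_Cons: "hurwitz_step\<^sup>*\<^sup>* T T' \<Longrightarrow> hurwitz_step\<^sup>*\<^sup>* (a # T) (a # T')"
proof (induction rule: rtranclp_induct)
  case (step T' T'')
  then obtain i where "i + 1 < length T'" "T'' = hurwitz_move i T'"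
    unfolding hurwitz_step_def by blast
  then have "hurwitz_step (a # T') (a # T'')"
    unfolding hurwitz_step_def by (intro exI[of _ "Suc i"]) simp
  then show ?case
    using step.IH by simp
qed simp

lemma hurwitz_steps_append: "hurwitz_step\<^sup>*\<^sup>* T T' \<Longrightarrow> hurwitz_step\<^sup>*\<^sup>* (T @ R) (T' @ R)"
proof (induction rule: rtranclp_induct)
  case (step T' T'')
  then obtain i where "i + 1 < length T'" "T'' = hurwitz_move i T'"
    unfolding hurwitz_step_def by blast
  then have "hurwitz_step (T' @ R) (T'' @ R)"
    unfolding hurwitz_step_def by (intro exI[of _ i]) (simp add: hurwitz_move_append)
  then show ?case
    using step.IH by simp
qed simp

lemma hurwitz_steps_prepend: "hurwitz_step\<^sup>*\<^sup>* T T' \<Longrightarrow> hurwitz_step\<^sup>*\<^sup>* (P @ T) (P @ T')"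
  by (induction P) (simp_all add: hurwitz_steps_Cons)

lemma hurwitz_steps_to_front: "hurwitz_step\<^sup>*\<^sup>* (A @ y # B) (y # map (\<lambda>a. matrix_inv y ** a ** y) A @ B)"
proof (induction A)
  case (Cons a A)
  then have "hurwitz_step\<^sup>*\<^sup>* (a # A @ y # B) (a # y # map (\<lambda>a. matrix_inv y ** a ** y) A @ B)"
    by (rule hurwitz_steps_Cons)
  then show ?case
    using hurwitz_step_0 by (simp add: rtranclp.rtrancl_into_rtrancl)
qed simp

lemma hurwitz_steps_to_end:
  assumes G: "matrix_group G" and C: "conj_closed G C" and "x \<in> C"
  shows "set B \<subseteq> G \<Longrightarrow> \<exists>w\<in>C. hurwitz_step\<^sup>*\<^sup>* (w # B) (B @ [x])"
proof (induction B)
  case Nil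
  show ?case
    using \<open>x \<in> C\<close> by auto
next
  case (Cons b B)
  then obtain w where w: "w \<in> C" "hurwitz_step\<^sup>*\<^sup>* (w # B) (B @ [x])"
    by auto
  have b: "b \<in> G" "invertible b"
    using Cons.prems G matrix_group_invertible by auto
  have "hurwitz_step (b ** w ** matrix_inv b # b # B) (b # w # B)"
    using hurwitz_step_0[of "b ** w ** matrix_inv b" b B] by (simp add: matrix_inv_conj_cancel b)
  then have "hurwitz_step\<^sup>*\<^sup>* (b ** w ** matrix_inv b # b # B) ((b # B) @ [x])"
    using converse_rtranclp_into_rtranclp[OF _ hurwitz_steps_Cons[OF w(2)]] by simp
  moreover have "b ** w ** matrix_inv b \<in> C"
    using C b w(1) unfolding conj_closed_def by blast
  ultimately show ?case
    by blast
qed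

lemma count_in_Nil [simp]: "count_in C [] = 0"
  by (simp add: count_in_def)

lemma count_in_append [simp]: "count_in C (A @ B) = count_in C A + count_in C B"
  by (simp add: count_in_def)

lemma count_in_Cons [simp]: "count_in C (r # T) = (if r \<in> C then 1 else 0) + count_in C T"
  by (simp add: count_in_def)

lemma count_in_pos_iff: "0 < count_in C T \<longleftrightarrow> (\<exists>r\<in>set T. r \<in> C)"
  by (induction T) auto

lemma count_in_Un_le: "count_in (A \<union> B) T \<le> count_in A T + count_in B T"
  by (induction T) auto

lemma count_in_map_mono: "(\<And>a. a \<in> C \<Longrightarrow> f a \<in> C) \<Longrightarrow> count_in C A \<le> count_in C (map f A)"
  by (induction A) auto

lemma hurwitz_steps_extract_pattern:
  fixes K :: "'k \<Rightarrow> mat2 set"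
  assumes G: "matrix_group G" and K: "\<And>k. conj_closed G (K k)" and disj: "disjoint_family K"
  shows "set T \<subseteq> G \<Longrightarrow> (\<And>k. count (mset p) k \<le> count_in (K k) T) \<Longrightarrow>
    \<exists>P B. hurwitz_step\<^sup>*\<^sup>* T (P @ B) \<and> list_all2 (\<lambda>r k. r \<in> K k) P p \<and> set B \<subseteq> G"
proof (induction p arbitrary: T)
  case Nil
  then show ?case
    by (intro exI[of _ "[]"] exI[of _ T]) simp
next
  case (Cons k p)
  have "0 < count_in (K k) T"
    using Cons.prems(2)[of k] by simp
  then obtain r where r: "r \<in> set T" "r \<in> K k"
    using count_in_pos_iff by blast
  then obtain A B where T: "T = A @ r # B"
    using split_list by metis
  define T' where "T' = map (\<lambda>a. matrix_inv r ** a ** r) A @ B"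
  have rG: "r \<in> G"
    using Cons.prems(1) r(1) by blast
  have T'G: "set T' \<subseteq> G"
    using Cons.prems(1) conj_closed_right[OF G conj_closed_self[OF G] rG] by (auto simp: T T'_def)
  have "count (mset p) j \<le> count_in (K j) T'" for j
  proof -
    have "count_in (K j) A \<le> count_in (K j) (map (\<lambda>a. matrix_inv r ** a ** r) A)"
      using conj_closed_right[OF G K rG] by (rule count_in_map_mono)
    moreover have "r \<in> K j \<longleftrightarrow> j = k"
      using r(2) disj unfolding disjoint_family_on_def by blast
    ultimately show ?thesis
      using Cons.prems(2)[of j] by (auto simp: T T'_def split: if_splits)
  qed
  then obtain P B' where P: "hurwitz_step\<^sup>*\<^sup>* T' (P @ B')" "list_all2 (\<lambda>r k. r \<in> K k) P p" "set B' \<subseteq> G"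
    using Cons.IH[OF T'G] by blast
  have "hurwitz_step\<^sup>*\<^sup>* T (r # T')"
    unfolding T T'_def by (rule hurwitz_steps_to_front)
  also have "hurwitz_step\<^sup>*\<^sup>* (r # T') ((r # P) @ B')"
    using hurwitz_steps_Cons[OF P(1)] by simp
  finally show ?case
    using P(2,3) r(2) by fastforce
qed

section \<open>The fourteen reflections of G6\<close>

definition q4 :: "int \<Rightarrow> int \<Rightarrow> int \<Rightarrow> int \<Rightarrow> complex" where
  "q4 a b c d = (of_int a + of_int b * r3 + (of_int c + of_int d * r3) * \<i>) / 4"

definition q16 :: "int \<Rightarrow> int \<Rightarrow> int \<Rightarrow> int \<Rightarrow> complex" where
  "q16 a b c d = (of_int a + of_int b * r3 + (of_int c + of_int d * r3) * \<i>) / 16"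

lemma q4_mult:
  "q4 a b c d * q4 e f g h =
    q16 (a*e + 3*b*f - c*g - 3*d*h) (a*f + b*e - c*h - d*g) (a*g + c*e + 3*b*h + 3*d*f) (a*h + d*e + b*g + c*f)"
proof -
  have r3_r3: "r3 * (r3 * z) = 3 * z" for z
    unfolding r3_def mult.assoc[symmetric] of_real_mult[symmetric] by simp
  show ?thesis
    unfolding q4_def q16_def by (simp add: field_simps) (simp add: algebra_simps r3_r3)
qed

lemma q16_add: "q16 a b c d + q16 e f g h = q16 (a + e) (b + f) (c + g) (d + h)"
  unfolding q16_def by (simp add: add_divide_distrib[symmetric] algebra_simps)

lemma q4_add: "q4 a b c d + q4 e f g h = q4 (a + e) (b + f) (c + g) (d + h)"
  unfolding q4_def by (simp add: add_divide_distrib[symmetric] algebra_simps)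

lemma mk2_mult: "mk2 a b c d ** mk2 e f g h = mk2 (a*e + b*g) (a*f + b*h) (c*e + d*g) (c*f + d*h)"
  unfolding mk2_def matrix_matrix_mult_def by (simp add: vec_eq_iff forall_2 sum_2)

lemma mat_1_mk2: "(mat 1 :: mat2) = mk2 (q16 16 0 0 0) (q16 0 0 0 0) (q16 0 0 0 0) (q16 16 0 0 0)"
  unfolding mk2_def q16_def by (simp add: vec_eq_iff forall_2 mat_def)

lemma transpose_mk2: "transpose (mk2 a b c d) = mk2 a c b d"
  unfolding mk2_def transpose_def by (simp add: vec_eq_iff forall_2)

lemma trace_mk2: "trace (mk2 a b c d) = a + d"
  unfolding mk2_def trace_def by (simp add: sum_2)

text \<open>Px, Py, Pz are the Pauli matrices (so Pz = s) and Mx, My, Mz their negatives; Ra = t, and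
  Ra', ..., Rd' are the inverses of Ra, ..., Rd.\<close>

datatype g6_refl = Px | Mx | Py | My | Pz | Mz | Ra | Rb | Rc | Rd | Ra' | Rb' | Rc' | Rd'

fun refl_mat :: "g6_refl \<Rightarrow> mat2" where
  "refl_mat Px = mk2 (q4 0 0 0 0) (q4 4 0 0 0) (q4 4 0 0 0) (q4 0 0 0 0)"
| "refl_mat Mx = mk2 (q4 0 0 0 0) (q4 (-4) 0 0 0) (q4 (-4) 0 0 0) (q4 0 0 0 0)"
| "refl_mat Py = mk2 (q4 0 0 0 0) (q4 0 0 (-4) 0) (q4 0 0 4 0) (q4 0 0 0 0)"
| "refl_mat My = mk2 (q4 0 0 0 0) (q4 0 0 4 0) (q4 0 0 (-4) 0) (q4 0 0 0 0)"
| "refl_mat Pz = mk2 (q4 4 0 0 0) (q4 0 0 0 0) (q4 0 0 0 0) (q4 (-4) 0 0 0)"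
| "refl_mat Mz = mk2 (q4 (-4) 0 0 0) (q4 0 0 0 0) (q4 0 0 0 0) (q4 4 0 0 0)"
| "refl_mat Ra = mk2 (q4 1 1 (-1) 1) (q4 1 1 (-1) 1) (q4 (-1) 1 (-1) (-1)) (q4 1 (-1) 1 1)"
| "refl_mat Rb = mk2 (q4 1 (-1) 1 1) (q4 (-1) 1 (-1) (-1)) (q4 1 1 (-1) 1) (q4 1 1 (-1) 1)"
| "refl_mat Rc = mk2 (q4 1 (-1) 1 1) (q4 1 (-1) 1 1) (q4 (-1) (-1) 1 (-1)) (q4 1 1 (-1) 1)"
| "refl_mat Rd = mk2 (q4 1 1 (-1) 1) (q4 (-1) (-1) 1 (-1)) (q4 1 (-1) 1 1) (q4 1 (-1) 1 1)"
| "refl_mat Ra' = mk2 (q4 1 1 1 (-1)) (q4 (-1) 1 1 1) (q4 1 1 1 (-1)) (q4 1 (-1) (-1) (-1))"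
| "refl_mat Rb' = mk2 (q4 1 (-1) (-1) (-1)) (q4 1 1 1 (-1)) (q4 (-1) 1 1 1) (q4 1 1 1 (-1))"
| "refl_mat Rc' = mk2 (q4 1 (-1) (-1) (-1)) (q4 (-1) (-1) (-1) 1) (q4 1 (-1) (-1) (-1)) (q4 1 1 1 (-1))"
| "refl_mat Rd' = mk2 (q4 1 1 1 (-1)) (q4 1 (-1) (-1) (-1)) (q4 (-1) (-1) (-1) 1) (q4 1 (-1) (-1) (-1))"

fun refl_inv :: "g6_refl \<Rightarrow> g6_refl" where
  "refl_inv Ra = Ra'"
| "refl_inv Rb = Rb'"
| "refl_inv Rc = Rc'"
| "refl_inv Rd = Rd'"
| "refl_inv Ra' = Ra"
| "refl_inv Rb' = Rb"
| "refl_inv Rc' = Rc"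
| "refl_inv Rd' = Rd"
| "refl_inv a = a"

fun conj_refl :: "g6_refl \<Rightarrow> g6_refl \<Rightarrow> g6_refl" where
  "conj_refl a Px = (case a of Px \<Rightarrow> Px | Mx \<Rightarrow> Mx | Py \<Rightarrow> My | My \<Rightarrow> Py | Pz \<Rightarrow> Mz | Mz \<Rightarrow> Pz | Ra \<Rightarrow> Rb | Rb \<Rightarrow> Ra | Rc \<Rightarrow> Rd | Rd \<Rightarrow> Rc | Ra' \<Rightarrow> Rb' | Rb' \<Rightarrow> Ra' | Rc' \<Rightarrow> Rd' | Rd' \<Rightarrow> Rc')"
| "conj_refl a Mx = (case a of Px \<Rightarrow> Px | Mx \<Rightarrow> Mx | Py \<Rightarrow> My | My \<Rightarrow> Py | Pz \<Rightarrow> Mz | Mz \<Rightarrow> Pz | Ra \<Rightarrow> Rb | Rb \<Rightarrow> Ra | Rc \<Rightarrow> Rd | Rd \<Rightarrow> Rc | Ra' \<Rightarrow> Rb' | Rb' \<Rightarrow> Ra' | Rc' \<Rightarrow> Rd' | Rd' \<Rightarrow> Rc')"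
| "conj_refl a Py = (case a of Px \<Rightarrow> Mx | Mx \<Rightarrow> Px | Py \<Rightarrow> Py | My \<Rightarrow> My | Pz \<Rightarrow> Mz | Mz \<Rightarrow> Pz | Ra \<Rightarrow> Rc | Rb \<Rightarrow> Rd | Rc \<Rightarrow> Ra | Rd \<Rightarrow> Rb | Ra' \<Rightarrow> Rc' | Rb' \<Rightarrow> Rd' | Rc' \<Rightarrow> Ra' | Rd' \<Rightarrow> Rb')"
| "conj_refl a My = (case a of Px \<Rightarrow> Mx | Mx \<Rightarrow> Px | Py \<Rightarrow> Py | My \<Rightarrow> My | Pz \<Rightarrow> Mz | Mz \<Rightarrow> Pz | Ra \<Rightarrow> Rc | Rb \<Rightarrow> Rd | Rc \<Rightarrow> Ra | Rd \<Rightarrow> Rb | Ra' \<Rightarrow> Rc' | Rb' \<Rightarrow> Rd' | Rc' \<Rightarrow> Ra' | Rd' \<Rightarrow> Rb')"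
| "conj_refl a Pz = (case a of Px \<Rightarrow> Mx | Mx \<Rightarrow> Px | Py \<Rightarrow> My | My \<Rightarrow> Py | Pz \<Rightarrow> Pz | Mz \<Rightarrow> Mz | Ra \<Rightarrow> Rd | Rb \<Rightarrow> Rc | Rc \<Rightarrow> Rb | Rd \<Rightarrow> Ra | Ra' \<Rightarrow> Rd' | Rb' \<Rightarrow> Rc' | Rc' \<Rightarrow> Rb' | Rd' \<Rightarrow> Ra')"
| "conj_refl a Mz = (case a of Px \<Rightarrow> Mx | Mx \<Rightarrow> Px | Py \<Rightarrow> My | My \<Rightarrow> Py | Pz \<Rightarrow> Pz | Mz \<Rightarrow> Mz | Ra \<Rightarrow> Rd | Rb \<Rightarrow> Rc | Rc \<Rightarrow> Rb | Rd \<Rightarrow> Ra | Ra' \<Rightarrow> Rd' | Rb' \<Rightarrow> Rc' | Rc' \<Rightarrow> Rb' | Rd' \<Rightarrow> Ra')"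
| "conj_refl a Ra = (case a of Px \<Rightarrow> My | Mx \<Rightarrow> Py | Py \<Rightarrow> Mz | My \<Rightarrow> Pz | Pz \<Rightarrow> Px | Mz \<Rightarrow> Mx | Ra \<Rightarrow> Ra | Rb \<Rightarrow> Rc | Rc \<Rightarrow> Rd | Rd \<Rightarrow> Rb | Ra' \<Rightarrow> Ra' | Rb' \<Rightarrow> Rc' | Rc' \<Rightarrow> Rd' | Rd' \<Rightarrow> Rb')"
| "conj_refl a Rb = (case a of Px \<Rightarrow> Py | Mx \<Rightarrow> My | Py \<Rightarrow> Mz | My \<Rightarrow> Pz | Pz \<Rightarrow> Mx | Mz \<Rightarrow> Px | Ra \<Rightarrow> Rd | Rb \<Rightarrow> Rb | Rc \<Rightarrow> Ra | Rd \<Rightarrow> Rc | Ra' \<Rightarrow> Rd' | Rb' \<Rightarrow> Rb' | Rc' \<Rightarrow> Ra' | Rd' \<Rightarrow> Rc')"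
| "conj_refl a Rc = (case a of Px \<Rightarrow> Py | Mx \<Rightarrow> My | Py \<Rightarrow> Pz | My \<Rightarrow> Mz | Pz \<Rightarrow> Px | Mz \<Rightarrow> Mx | Ra \<Rightarrow> Rb | Rb \<Rightarrow> Rd | Rc \<Rightarrow> Rc | Rd \<Rightarrow> Ra | Ra' \<Rightarrow> Rb' | Rb' \<Rightarrow> Rd' | Rc' \<Rightarrow> Rc' | Rd' \<Rightarrow> Ra')"
| "conj_refl a Rd = (case a of Px \<Rightarrow> My | Mx \<Rightarrow> Py | Py \<Rightarrow> Pz | My \<Rightarrow> Mz | Pz \<Rightarrow> Mx | Mz \<Rightarrow> Px | Ra \<Rightarrow> Rc | Rb \<Rightarrow> Ra | Rc \<Rightarrow> Rb | Rd \<Rightarrow> Rd | Ra' \<Rightarrow> Rc' | Rb' \<Rightarrow> Ra' | Rc' \<Rightarrow> Rb' | Rd' \<Rightarrow> Rd')"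
| "conj_refl a Ra' = (case a of Px \<Rightarrow> Pz | Mx \<Rightarrow> Mz | Py \<Rightarrow> Mx | My \<Rightarrow> Px | Pz \<Rightarrow> My | Mz \<Rightarrow> Py | Ra \<Rightarrow> Ra | Rb \<Rightarrow> Rd | Rc \<Rightarrow> Rb | Rd \<Rightarrow> Rc | Ra' \<Rightarrow> Ra' | Rb' \<Rightarrow> Rd' | Rc' \<Rightarrow> Rb' | Rd' \<Rightarrow> Rc')"
| "conj_refl a Rb' = (case a of Px \<Rightarrow> Mz | Mx \<Rightarrow> Pz | Py \<Rightarrow> Px | My \<Rightarrow> Mx | Pz \<Rightarrow> My | Mz \<Rightarrow> Py | Ra \<Rightarrow> Rc | Rb \<Rightarrow> Rb | Rc \<Rightarrow> Rd | Rd \<Rightarrow> Ra | Ra' \<Rightarrow> Rc' | Rb' \<Rightarrow> Rb' | Rc' \<Rightarrow> Rd' | Rd' \<Rightarrow> Ra')"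
| "conj_refl a Rc' = (case a of Px \<Rightarrow> Pz | Mx \<Rightarrow> Mz | Py \<Rightarrow> Px | My \<Rightarrow> Mx | Pz \<Rightarrow> Py | Mz \<Rightarrow> My | Ra \<Rightarrow> Rd | Rb \<Rightarrow> Ra | Rc \<Rightarrow> Rc | Rd \<Rightarrow> Rb | Ra' \<Rightarrow> Rd' | Rb' \<Rightarrow> Ra' | Rc' \<Rightarrow> Rc' | Rd' \<Rightarrow> Rb')"
| "conj_refl a Rd' = (case a of Px \<Rightarrow> Mz | Mx \<Rightarrow> Pz | Py \<Rightarrow> Mx | My \<Rightarrow> Px | Pz \<Rightarrow> Py | Mz \<Rightarrow> My | Ra \<Rightarrow> Rb | Rb \<Rightarrow> Rc | Rc \<Rightarrow> Ra | Rd \<Rightarrow> Rd | Ra' \<Rightarrow> Rb' | Rb' \<Rightarrow> Rc' | Rc' \<Rightarrow> Ra' | Rd' \<Rightarrow> Rd')"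

lemma refl_mat_mult_refl_inv: "refl_mat a ** refl_mat (refl_inv a) = mat 1"
  by (cases a) (simp_all add: mk2_mult q4_mult q16_add mat_1_mk2)

lemma matrix_inv_refl_mat: "matrix_inv (refl_mat a) = refl_mat (refl_inv a)"
  by (rule matrix_inv_unique) (rule refl_mat_mult_refl_inv)

lemma invertible_refl_mat: "invertible (refl_mat a)"
  using refl_mat_mult_refl_inv invertible_right_inverse by blast

lemma refl_inv_refl_inv [simp]: "refl_inv (refl_inv a) = a"
  by (cases a) simp_all

lemma refl_mat_mult_conj_refl: "refl_mat a ** refl_mat b = refl_mat b ** refl_mat (conj_refl a b)"
  by (cases a; cases b) (simp_all add: mk2_mult q4_mult q16_add)

lemma refl_mat_conj: "matrix_inv (refl_mat b) ** refl_mat a ** refl_mat b = refl_mat (conj_refl a b)"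
proof -
  have "matrix_inv (refl_mat b) ** refl_mat a ** refl_mat b
      = matrix_inv (refl_mat b) ** (refl_mat b ** refl_mat (conj_refl a b))"
    by (simp only: matrix_mul_assoc[symmetric] refl_mat_mult_conj_refl[of a b])
  also have "\<dots> = refl_mat (conj_refl a b)"
    by (simp add: matrix_mul_assoc matrix_inv_left invertible_refl_mat)
  finally show ?thesis .
qed

lemma refl_mat_conj_left: "refl_mat b ** refl_mat a ** matrix_inv (refl_mat b) = refl_mat (conj_refl a (refl_inv b))"
  using refl_mat_conj[of "refl_inv b" a] by (simp add: matrix_inv_refl_mat)

lemma conj_refl_refl_inv: "conj_refl (conj_refl a (refl_inv b)) b = a"
  by (cases a; cases b) simp_all

lemma s_mat_eq: "s_mat = refl_mat Pz"
  by (simp add: s_mat_def q4_def)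

lemma t_mat_eq: "t_mat = refl_mat Ra"
  by (simp add: t_mat_def q4_def algebra_simps)

text \<open>u is a scalar multiple of Rc', so it conjugates like Rc'.\<close>

lemma u_mat_mult_refl_mat: "u_mat ** refl_mat a = refl_mat (conj_refl a Rc) ** u_mat"
  by (cases a) (simp_all add: u_mat_def t_mat_eq transpose_mk2 mk2_mult q4_mult q16_add)

lemma invertible_u_mat: "invertible u_mat"
proof -
  have "u_mat ** transpose (refl_mat Ra') = mat 1"
    using refl_mat_mult_refl_inv[of Ra']
    by (simp add: u_mat_def t_mat_eq matrix_transpose_mul[symmetric])
  then show ?thesis
    using invertible_right_inverse by blast
qed

lemma u_mat_conj: "u_mat ** refl_mat a ** matrix_inv u_mat = refl_mat (conj_refl a Rc)"
  by (simp add: u_mat_mult_refl_mat flip: matrix_mul_assoc)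
     (simp add: matrix_mul_assoc matrix_inv_right invertible_u_mat)

lemma u_mat_conj_inv: "matrix_inv u_mat ** refl_mat a ** u_mat = refl_mat (conj_refl a Rc')"
proof -
  have eq: "refl_mat a ** u_mat = u_mat ** refl_mat (conj_refl a Rc')"
    using u_mat_mult_refl_mat[of "conj_refl a Rc'"] conj_refl_refl_inv[of a Rc] by simp
  have "matrix_inv u_mat ** refl_mat a ** u_mat = (matrix_inv u_mat ** u_mat) ** refl_mat (conj_refl a Rc')"
    by (simp only: matrix_mul_assoc[symmetric] eq)
  then show ?thesis
    by (simp only: matrix_inv_left[OF invertible_u_mat] matrix_mul_lid)
qed

declare refl_mat.simps [simp del] conj_refl.simps [simp del]

lemma matrix_group_G7: "matrix_group G7"
  unfolding G7_def
  by (rule matrix_group_gen_group) (auto simp: s_mat_eq t_mat_eq invertible_refl_mat invertible_u_mat)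

lemma matrix_group_G6: "matrix_group G6"
  unfolding G6_def
  by (rule matrix_group_gen_group) (auto simp: s_mat_eq t_mat_eq invertible_refl_mat)

lemma G6_subset_G7: "G6 \<subseteq> G7"
  unfolding G6_def G7_def by (rule gen_group_mono) auto

datatype refl_class = ClS | ClR | ClRinv

fun cls_set :: "refl_class \<Rightarrow> mat2 set" where
  "cls_set ClS = S_cls"
| "cls_set ClR = R1"
| "cls_set ClRinv = R1inv"

fun cls_elems :: "refl_class \<Rightarrow> g6_refl list" where
  "cls_elems ClS = [Px, Mx, Py, My, Pz, Mz]"
| "cls_elems ClR = [Ra, Rb, Rc, Rd]"
| "cls_elems ClRinv = [Ra', Rb', Rc', Rd']"

lemma conj_refl_cls_elems: "a \<in> set (cls_elems k) \<Longrightarrow> conj_refl a b \<in> set (cls_elems k)"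
  by (cases k; cases b) (auto simp: conj_refl.simps)

lemma G7_generator_conj:
  assumes "x \<in> {s_mat, t_mat, u_mat}"
  shows "\<exists>b. \<forall>a. x ** refl_mat a ** matrix_inv x = refl_mat (conj_refl a b)
    \<and> matrix_inv x ** refl_mat a ** x = refl_mat (conj_refl a (refl_inv b))"
proof -
  consider "x = refl_mat Pz" | "x = refl_mat Ra" | "x = u_mat"
    using assms s_mat_eq t_mat_eq by blast
  then show ?thesis
  proof cases
    case 1
    then show ?thesis
      using refl_mat_conj refl_mat_conj_left by (intro exI[of _ Pz]) simp
  next
    case 2
    then show ?thesis
      using refl_mat_conj refl_mat_conj_left by (intro exI[of _ Ra']) simp
  next
    case 3
    then show ?thesis
      using u_mat_conj u_mat_conj_inv by (intro exI[of _ Rc]) simp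
  qed
qed

lemma conj_closed_G7_refl_mat: "conj_closed G7 (refl_mat ` set (cls_elems k))"
  unfolding G7_def
proof (rule gen_group_conj_closed)
  show "\<forall>x\<in>{s_mat, t_mat, u_mat}. invertible x"
    by (simp add: s_mat_eq t_mat_eq invertible_refl_mat invertible_u_mat)
next
  fix x c assume x: "x \<in> {s_mat, t_mat, u_mat}" and "c \<in> refl_mat ` set (cls_elems k)"
  then obtain a where a: "a \<in> set (cls_elems k)" "c = refl_mat a"
    by blast
  obtain b where "x ** c ** matrix_inv x = refl_mat (conj_refl a b)"
    "matrix_inv x ** c ** x = refl_mat (conj_refl a (refl_inv b))"
    using G7_generator_conj[OF x] a(2) by blast
  then show "x ** c ** matrix_inv x \<in> refl_mat ` set (cls_elems k) \<and>
      matrix_inv x ** c ** x \<in> refl_mat ` set (cls_elems k)"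
    using a(1) conj_refl_cls_elems by auto
qed

lemma cls_set_subset: "cls_set k \<subseteq> refl_mat ` set (cls_elems k)"
proof -
  have S: "conj_class G7 (refl_mat Pz) \<subseteq> refl_mat ` set (cls_elems ClS)"
    and R: "conj_class G7 (refl_mat Ra) \<subseteq> refl_mat ` set (cls_elems ClR)"
    by (rule conj_class_subset_conj_closed[OF conj_closed_G7_refl_mat], simp)+
  have "matrix_inv ` conj_class G7 (refl_mat Ra) \<subseteq> matrix_inv ` refl_mat ` set (cls_elems ClR)"
    by (rule image_mono[OF R])
  also have "\<dots> = refl_mat ` set (cls_elems ClRinv)"
    by (simp add: image_image matrix_inv_refl_mat)
  finally show ?thesis
    using S R by (cases k) (simp_all add: S_cls_def R1_def R1inv_def s_mat_eq t_mat_eq)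
qed

lemma conj_closed_cls_set: "conj_closed G6 (cls_set k)"
proof -
  have "conj_closed G7 (cls_set k)"
  proof (cases k)
    case ClRinv
    have "R1 \<subseteq> G7"
      unfolding R1_def
      by (rule conj_class_subset[OF matrix_group_G7]) (simp add: G7_def gen_group_generator)
    then show ?thesis
      using ClRinv conj_closed_image_matrix_inv[OF matrix_group_G7] conj_closed_conj_class[OF matrix_group_G7]
      by (simp add: R1inv_def R1_def)
  qed (simp_all add: S_cls_def R1_def conj_closed_conj_class matrix_group_G7)
  then show ?thesis
    using G6_subset_G7 conj_closed_subset by blast
qed

fun cls_trace :: "refl_class \<Rightarrow> complex" where
  "cls_trace ClS = q4 0 0 0 0"
| "cls_trace ClR = q4 2 0 0 2"
| "cls_trace ClRinv = q4 2 0 0 (-2)"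

lemma trace_refl_mat: "a \<in> set (cls_elems k) \<Longrightarrow> trace (refl_mat a) = cls_trace k"
  by (cases k) (auto simp: refl_mat.simps trace_mk2 q4_add)

lemma inj_cls_trace: "inj cls_trace"
proof (rule injI)
  fix k j assume "cls_trace k = cls_trace j"
  then have "Im (cls_trace k) = Im (cls_trace j)"
    by simp
  moreover have "Im (cls_trace ClS) = 0" "Im (cls_trace ClR) = sqrt 3 / 2"
    "Im (cls_trace ClRinv) = - (sqrt 3 / 2)"
    by (simp_all add: q4_def r3_def)
  moreover have "sqrt 3 / 2 > (0::real)"
    by simp
  ultimately show "k = j"
    by (cases k; cases j) auto
qed

lemma disjoint_family_cls_set: "disjoint_family cls_set"
  unfolding disjoint_family_on_def
proof (intro ballI impI)
  fix k j :: refl_class assume "k \<noteq> j"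
  show "cls_set k \<inter> cls_set j = {}"
  proof (rule ccontr)
    assume "cls_set k \<inter> cls_set j \<noteq> {}"
    then obtain a b where "a \<in> set (cls_elems k)" "b \<in> set (cls_elems j)" "refl_mat a = refl_mat b"
      using cls_set_subset by blast
    then have "cls_trace k = cls_trace j"
      using trace_refl_mat by metis
    then show False
      using \<open>k \<noteq> j\<close> inj_cls_trace by (simp add: inj_eq)
  qed
qed

section \<open>Last entries reachable from short factorizations\<close>

fun refl_move :: "nat \<Rightarrow> g6_refl list \<Rightarrow> g6_refl list" where
  "refl_move 0 (a # b # ws) = b # conj_refl a b # ws"
| "refl_move (Suc i) (a # ws) = a # refl_move i ws"
| "refl_move _ ws = ws"

lemma length_refl_move [simp]: "length (refl_move i ws) = length ws"
  by (induction i ws rule: refl_move.induct) auto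

lemma length_fold_refl_move: "length (fold refl_move u ws) = length ws"
  by (induction u arbitrary: ws) auto

lemma map_refl_move: "i + 1 < length ws \<Longrightarrow> map refl_mat (refl_move i ws) = hurwitz_move i (map refl_mat ws)"
  by (induction i ws rule: refl_move.induct) (auto simp: refl_mat_conj)

lemma hurwitz_steps_fold_refl_move:
  "\<forall>i\<in>set u. i + 1 < length ws \<Longrightarrow> hurwitz_step\<^sup>*\<^sup>* (map refl_mat ws) (map refl_mat (fold refl_move u ws))"
proof (induction u arbitrary: ws)
  case (Cons i u)
  then have "hurwitz_step (map refl_mat ws) (map refl_mat (refl_move i ws))"
    unfolding hurwitz_step_def by (auto simp: map_refl_move)
  then show ?case
    using Cons by (auto intro: converse_rtranclp_into_rtranclp)
qed simp

fun last_pair_lasts :: "nat \<Rightarrow> g6_refl list \<Rightarrow> g6_refl list" where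
  "last_pair_lasts 0 ws = []"
| "last_pair_lasts (Suc n) ws = last ws # last_pair_lasts n (refl_move (length ws - 2) ws)"

lemma last_pair_lasts_reachable:
  "2 \<le> length ws \<Longrightarrow> y \<in> set (last_pair_lasts n ws) \<Longrightarrow>
    \<exists>ws'. hurwitz_step\<^sup>*\<^sup>* (map refl_mat ws) (map refl_mat ws') \<and> ws' \<noteq> [] \<and> last ws' = y"
proof (induction n arbitrary: ws)
  case (Suc n)
  show ?case
  proof (cases "y = last ws")
    case False
    then have "y \<in> set (last_pair_lasts n (refl_move (length ws - 2) ws))"
      using Suc.prems(2) by simp
    moreover have "2 \<le> length (refl_move (length ws - 2) ws)"
      using Suc.prems(1) by simp
    ultimately obtain ws' where "hurwitz_step\<^sup>*\<^sup>* (map refl_mat (refl_move (length ws - 2) ws)) (map refl_mat ws')"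
      "ws' \<noteq> []" "last ws' = y"
      using Suc.IH by blast
    moreover have "hurwitz_step\<^sup>*\<^sup>* (map refl_mat ws) (map refl_mat (refl_move (length ws - 2) ws))"
      using hurwitz_steps_fold_refl_move[of "[length ws - 2]"] Suc.prems(1) by simp
    ultimately show ?thesis
      by (blast intro: rtranclp_trans)
  qed (use Suc.prems(1) in auto)
qed simp

fun lasts_after_prefixes :: "nat list list \<Rightarrow> g6_refl list \<Rightarrow> g6_refl list" where
  "lasts_after_prefixes [] ws = []"
| "lasts_after_prefixes (u # U) ws = last_pair_lasts 6 (fold refl_move u ws) @ lasts_after_prefixes U ws"

lemma lasts_after_prefixes_reachable:
  assumes "2 \<le> length ws" "\<forall>u\<in>set U. \<forall>i\<in>set u. i + 1 < length ws" "y \<in> set (lasts_after_prefixes U ws)"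
  shows "\<exists>ws'. hurwitz_step\<^sup>*\<^sup>* (map refl_mat ws) (map refl_mat ws') \<and> ws' \<noteq> [] \<and> last ws' = y"
  using assms(2,3)
proof (induction U)
  case (Cons u U)
  show ?case
  proof (cases "y \<in> set (last_pair_lasts 6 (fold refl_move u ws))")
    case True
    then obtain ws' where "hurwitz_step\<^sup>*\<^sup>* (map refl_mat (fold refl_move u ws)) (map refl_mat ws')"
      "ws' \<noteq> []" "last ws' = y"
      using last_pair_lasts_reachable assms(1) by (metis length_fold_refl_move)
    moreover have "hurwitz_step\<^sup>*\<^sup>* (map refl_mat ws) (map refl_mat (fold refl_move u ws))"
      using hurwitz_steps_fold_refl_move Cons.prems(1) by simp
    ultimately show ?thesis
      by (blast intro: rtranclp_trans)
  qed (use Cons in auto)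
qed simp

definition lasts_reachable :: "refl_class list \<Rightarrow> g6_refl set \<Rightarrow> bool" where
  "lasts_reachable p Y \<longleftrightarrow> (\<forall>ws\<in>set (product_lists (map cls_elems p)). \<forall>y\<in>Y.
     \<exists>ws'. hurwitz_step\<^sup>*\<^sup>* (map refl_mat ws) (map refl_mat ws') \<and> ws' \<noteq> [] \<and> last ws' = y)"

text \<open>A named predicate rather than a lambda, so that evaluation does not unfold
  lasts_after_prefixes under a binder, which is prohibitively slow.\<close>

definition prefixes_cover :: "nat list list \<Rightarrow> g6_refl list \<Rightarrow> g6_refl list \<Rightarrow> bool" where
  "prefixes_cover U Y ws \<longleftrightarrow> set Y \<subseteq> set (lasts_after_prefixes U ws)"

lemma lasts_reachable_by_prefixes:
  assumes "2 \<le> length p" "\<forall>u\<in>set U. \<forall>i\<in>set u. i + 1 < length p"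
    and "list_all (prefixes_cover U Y) (product_lists (map cls_elems p))"
  shows "lasts_reachable p (set Y)"
  unfolding lasts_reachable_def
proof (intro ballI)
  fix ws y assume ws: "ws \<in> set (product_lists (map cls_elems p))" and "y \<in> set Y"
  have "length ws = length p"
    using in_set_product_lists_length[OF ws] by simp
  moreover have "y \<in> set (lasts_after_prefixes U ws)"
    using assms(3) ws \<open>y \<in> set Y\<close> by (auto simp: list_all_iff prefixes_cover_def)
  ultimately show "\<exists>ws'. hurwitz_step\<^sup>*\<^sup>* (map refl_mat ws) (map refl_mat ws') \<and> ws' \<noteq> [] \<and> last ws' = y"
    using lasts_after_prefixes_reachable assms(1,2) by simp
qed

text \<open>Found by computer search: for every list in each of the six patterns below, one of these
  move words followed by rotations of the last pair reaches each required last entry.\<close>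

definition move_prefixes :: "nat list list" where
  "move_prefixes = [[], [0,0], [1,0,0], [1,0,0,0,0], [1,1,1,0,0], [1,1]]"

lemma lasts_reachable_patterns:
  "lasts_reachable [ClS, ClS, ClR] (set (cls_elems ClS @ cls_elems ClR))"
  "lasts_reachable [ClS, ClS, ClRinv] (set (cls_elems ClS @ cls_elems ClRinv))"
  "lasts_reachable [ClR, ClR, ClS] (set (cls_elems ClR @ cls_elems ClS))"
  "lasts_reachable [ClRinv, ClRinv, ClS] (set (cls_elems ClRinv @ cls_elems ClS))"
  "lasts_reachable [ClR, ClR, ClS, ClRinv] (set (cls_elems ClRinv))"
  "lasts_reachable [ClRinv, ClRinv, ClS, ClR] (set (cls_elems ClR))"
  by (rule lasts_reachable_by_prefixes[where U = move_prefixes], simp, simp add: move_prefixes_def, code_simp)+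

lemma list_all2_in_image:
  "list_all2 (\<lambda>r k. r \<in> f ` A k) P p \<Longrightarrow> \<exists>ws. P = map f ws \<and> list_all2 (\<lambda>w k. w \<in> A k) ws p"
proof (induction P p rule: list_all2_induct)
  case (Cons r P k p)
  then obtain w ws where "r = f w" "w \<in> A k" "P = map f ws" "list_all2 (\<lambda>w k. w \<in> A k) ws p"
    by blast
  then show ?case
    by (intro exI[of _ "w # ws"]) simp
qed simp

lemma last_in_hurwitz_orbit:
  assumes T: "set T \<subseteq> G6" and cnt: "\<And>j. count (mset p) j \<le> count_in (cls_set j) T"
    and reach: "lasts_reachable p (set (cls_elems k))" and x: "x \<in> cls_set k"
  shows "\<exists>T'\<in>hurwitz_orbit T. T' \<noteq> [] \<and> last T' = x"
proof -
  obtain P B where PB: "hurwitz_step\<^sup>*\<^sup>* T (P @ B)" "list_all2 (\<lambda>r k. r \<in> cls_set k) P p" "set B \<subseteq> G6"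
    using hurwitz_steps_extract_pattern[OF matrix_group_G6 conj_closed_cls_set disjoint_family_cls_set T cnt] by blast
  have "list_all2 (\<lambda>r k. r \<in> refl_mat ` set (cls_elems k)) P p"
    using PB(2) by (rule list_all2_mono) (use cls_set_subset in blast)
  from list_all2_in_image[OF this] obtain ws
    where ws: "P = map refl_mat ws" "list_all2 (\<lambda>w k. w \<in> set (cls_elems k)) ws p"
    by blast
  then have ws_p: "ws \<in> set (product_lists (map cls_elems p))"
    by (simp add: product_lists_set list_all2_map2)
  obtain w where w: "w \<in> cls_set k" "hurwitz_step\<^sup>*\<^sup>* (w # B) (B @ [x])"
    using hurwitz_steps_to_end[OF matrix_group_G6 conj_closed_cls_set x PB(3)] by blast
  obtain y where y: "y \<in> set (cls_elems k)" "w = refl_mat y"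
    using cls_set_subset w(1) by blast
  obtain ws' where ws': "hurwitz_step\<^sup>*\<^sup>* (map refl_mat ws) (map refl_mat ws')" "ws' \<noteq> []" "last ws' = y"
    using reach ws_p y(1) unfolding lasts_reachable_def by blast
  have "hurwitz_step\<^sup>*\<^sup>* T (map refl_mat ws @ B)"
    using PB(1) ws(1) by simp
  also have "hurwitz_step\<^sup>*\<^sup>* \<dots> (map refl_mat ws' @ B)"
    using hurwitz_steps_append[OF ws'(1)] .
  also have "map refl_mat ws' @ B = map refl_mat (butlast ws' @ [last ws']) @ B"
    using ws'(2) by simp
  also have "\<dots> = map refl_mat (butlast ws') @ w # B"
    using ws'(3) y(2) by simp
  also have "hurwitz_step\<^sup>*\<^sup>* \<dots> (map refl_mat (butlast ws') @ B @ [x])"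
    using hurwitz_steps_prepend[OF w(2)] .
  finally show ?thesis
    unfolding hurwitz_orbit_def by auto
qed

lemma all_cls: "(\<forall>j. P j) \<longleftrightarrow> P ClS \<and> P ClR \<and> P ClRinv"
  by (metis refl_class.exhaust)

lemma reachable_pattern_exists:
  fixes n :: "refl_class \<Rightarrow> nat"
  assumes "(2 \<le> n ClS \<and> (1 \<le> n ClR \<or> 1 \<le> n ClRinv)) \<or> (2 \<le> n ClR \<and> 1 \<le> n ClS) \<or> (2 \<le> n ClRinv \<and> 1 \<le> n ClS)"
    and k: "1 \<le> n k"
  shows "\<exists>p. (\<forall>j. count (mset p) j \<le> n j) \<and> lasts_reachable p (set (cls_elems k))"
proof -
  have witness: "\<exists>p. (\<forall>j. count (mset p) j \<le> n j) \<and> lasts_reachable p (set (cls_elems k))"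
    if "lasts_reachable p Y" "set (cls_elems k) \<subseteq> Y"
      "count (mset p) ClS \<le> n ClS" "count (mset p) ClR \<le> n ClR" "count (mset p) ClRinv \<le> n ClRinv"
    for p Y
    using that all_cls[of "\<lambda>j. count (mset p) j \<le> n j"] unfolding lasts_reachable_def by blast
  consider "2 \<le> n ClS" "1 \<le> n ClR" "k \<noteq> ClRinv" | "2 \<le> n ClS" "1 \<le> n ClRinv" "k \<noteq> ClR"
    | "2 \<le> n ClR" "1 \<le> n ClS" "k \<noteq> ClRinv" | "2 \<le> n ClRinv" "1 \<le> n ClS" "k \<noteq> ClR"
    | "2 \<le> n ClR" "1 \<le> n ClS" "k = ClRinv" | "2 \<le> n ClRinv" "1 \<le> n ClS" "k = ClR"
    using assms by (cases k) auto
  then show ?thesis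
  proof cases
    case 1
    then show ?thesis
      by (intro witness[OF lasts_reachable_patterns(1)]) (cases k, simp_all)
  next
    case 2
    then show ?thesis
      by (intro witness[OF lasts_reachable_patterns(2)]) (cases k, simp_all)
  next
    case 3
    then show ?thesis
      by (intro witness[OF lasts_reachable_patterns(3)]) (cases k, simp_all)
  next
    case 4
    then show ?thesis
      by (intro witness[OF lasts_reachable_patterns(4)]) (cases k, simp_all)
  next
    case 5
    then show ?thesis
      using k by (intro witness[OF lasts_reachable_patterns(5)]) simp_all
  next
    case 6
    then show ?thesis
      using k by (intro witness[OF lasts_reachable_patterns(6)]) simp_all
  qed
qed

theorem proposition3p12:
  fixes T :: "mat2 list" and x :: mat2
  assumes refl: "\<forall>r \<in> set T. r \<in> G6 \<and> is_reflection r"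
    and len: "length T \<ge> 3"
    and cond: "(count_in S_cls T \<ge> 2 \<and> count_in Rprime T \<ge> 1)
             \<or> (count_in R1 T \<ge> 2 \<and> count_in S_cls T \<ge> 1)
             \<or> (count_in R1inv T \<ge> 2 \<and> count_in S_cls T \<ge> 1)"
    and xrefl: "is_reflection x"
    and xcls: "\<exists>C \<in> {R1, R1inv, S_cls}. x \<in> C \<and> (\<exists>r \<in> set T. r \<in> C)"
  shows "\<exists>T' \<in> hurwitz_orbit T. T' \<noteq> [] \<and> last T' = x"
proof -
  \<comment> \<open>len, xrefl and the reflection part of refl follow from the class conditions and are unused.\<close>
  define n where "n j = count_in (cls_set j) T" for j
  have T: "set T \<subseteq> G6"
    using refl by auto
  obtain k where k: "x \<in> cls_set k" "1 \<le> n k"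
  proof -
    obtain C r where "C \<in> {R1, R1inv, S_cls}" "x \<in> C" "r \<in> set T" "r \<in> C"
      using xcls by blast
    moreover have "C \<in> {R1, R1inv, S_cls} \<Longrightarrow> \<exists>k. C = cls_set k"
      using cls_set.simps by blast
    ultimately show thesis
      using that count_in_pos_iff unfolding n_def by (metis One_nat_def Suc_leI)
  qed
  have "count_in Rprime T \<le> n ClR + n ClRinv"
    using count_in_Un_le by (simp add: Rprime_def n_def)
  then have "(2 \<le> n ClS \<and> (1 \<le> n ClR \<or> 1 \<le> n ClRinv)) \<or> (2 \<le> n ClR \<and> 1 \<le> n ClS)
      \<or> (2 \<le> n ClRinv \<and> 1 \<le> n ClS)"
    using cond by (auto simp: n_def)
  then obtain p where "\<forall>j. count (mset p) j \<le> n j" "lasts_reachable p (set (cls_elems k))"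
    using reachable_pattern_exists[of n k] k(2) by blast
  then show ?thesis
    by (intro last_in_hurwitz_orbit[OF T _ _ k(1)]) (simp_all add: n_def)
qed

end
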